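(* Let $\Psi$ be a universal resource. Then $\mathcal{N}_{\mathrm{LE}}(\Psi)=\infty$.
   Context: For an $N$-qubit $|\psi\rangle$ and an $n$-qubit $|\phi\rangle$, $n\le N$, write $|\psi\rangle\geq_{\mathrm{LOCC}}|\phi\rangle$ if for some set $A$ of $n$ qubits the transformation $|\psi\rangle\to|\phi\rangle^A|0\rangle^{\bar A}$ is achievable exactly and with probability one by LOCC (each qubit a separate party). A resource is an infinite family $\Psi$ of multi-qubit pure states; it is universal if for every $n$ and every $n$-qubit $|\phi\rangle$ some $|\psi\rangle\in\Psi$ has $|\psi\rangle\geq_{\mathrm{LOCC}}|\phi\rangle$. For a state $|\psi\rangle$ on qubits $V$ and distinct qubits $\alpha,\beta\in V$, set $E^{\alpha,\beta}_{\mathrm{Bell}}(|\psi\rangle)=1$ if LOCC can deterministically (with probability one) and exactly produce the Bell state $\frac{1}{\sqrt2}(|00\rangle+|11\rangle)$ on the qubits $\alpha,\beta$ starting from $|\psi\rangle$, and $0$ otherwise. $\mathcal{N}_{\mathrm{LE}}(|\psi\rangle)$ is the maximal size $|A|$ of a subset $A\subseteq V$ such that $E^{\alpha,\beta}_{\mathrm{Bell}}(|\psi\rangle)=1$ for all distinct $\alpha,\beta\in A$. $\mathcal{N}_{\mathrm{LE}}(\Psi):=\sup_{|\psi\rangle\in\Psi}\mathcal{N}_{\mathrm{LE}}(|\psi\rangle)$. *)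

theory Defs
  imports Complex_Main "HOL-Library.Extended_Nat"
begin

text \<open>An N-qubit state on qubits 0..N-1 is a function from computational basis
  strings (nat => bool, False outside 0..N-1) to complex amplitudes.\<close>
type_synonym qstate = "(nat \<Rightarrow> bool) \<Rightarrow> complex"

definition basis :: "nat \<Rightarrow> (nat \<Rightarrow> bool) set" where
  "basis N = {x. \<forall>i. N \<le> i \<longrightarrow> \<not> x i}"

definition snorm :: "nat \<Rightarrow> qstate \<Rightarrow> real" where
  "snorm N \<psi> = sqrt (\<Sum>x\<in>basis N. (cmod (\<psi> x))\<^sup>2)"

definition is_state :: "nat \<Rightarrow> qstate \<Rightarrow> bool" where
  "is_state N \<psi> \<longleftrightarrow> (\<forall>x. x \<notin> basis N \<longrightarrow> \<psi> x = 0) \<and> snorm N \<psi> = 1"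

text \<open>Apply a 2x2 operator M (M out in) to qubit k.\<close>
definition apply_local :: "nat \<Rightarrow> (bool \<Rightarrow> bool \<Rightarrow> complex) \<Rightarrow> qstate \<Rightarrow> qstate" where
  "apply_local k M \<psi> = (\<lambda>x. \<Sum>b\<in>(UNIV::bool set). M (x k) b * \<psi> (x(k := b)))"

definition kraus_complete :: "(bool \<Rightarrow> bool \<Rightarrow> complex) list \<Rightarrow> bool" where
  "kraus_complete Ms \<longleftrightarrow>
     (\<forall>a c. (\<Sum>M\<leftarrow>Ms. \<Sum>b\<in>(UNIV::bool set). cnj (M b a) * M b c) = (if a = c then 1 else 0))"

text \<open>Deterministic exact LOCC (finite-round protocol tree): from \<psi> one can reach,
  with probability one, a state in the target set T.\<close>
inductive locc_reach :: "nat \<Rightarrow> qstate set \<Rightarrow> qstate \<Rightarrow> bool" for N T where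
  finished: "\<psi> \<in> T \<Longrightarrow> locc_reach N T \<psi>"
| local_step: "k < N \<Longrightarrow> kraus_complete Ms \<Longrightarrow>
    (\<forall>M\<in>set Ms. snorm N (apply_local k M \<psi>) \<noteq> 0 \<longrightarrow>
       locc_reach N T (\<lambda>x. apply_local k M \<psi> x / complex_of_real (snorm N (apply_local k M \<psi>))))
    \<Longrightarrow> locc_reach N T \<psi>"

text \<open>Embedding an n-qubit state \<phi> into N qubits: qubit j of \<phi> placed on qubit f j,
  all other qubits in |0>.\<close>
definition embed :: "nat \<Rightarrow> nat \<Rightarrow> (nat \<Rightarrow> nat) \<Rightarrow> qstate \<Rightarrow> qstate" where
  "embed N n f \<phi> = (\<lambda>x. if x \<in> basis N \<and> (\<forall>i<N. i \<notin> f ` {..<n} \<longrightarrow> \<not> x i)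
                         then \<phi> (\<lambda>j. j < n \<and> x (f j)) else 0)"

definition locc_geq :: "nat \<Rightarrow> qstate \<Rightarrow> nat \<Rightarrow> qstate \<Rightarrow> bool" where
  "locc_geq N \<psi> n \<phi> \<longleftrightarrow> n \<le> N \<and>
     (\<exists>f. inj_on f {..<n} \<and> f ` {..<n} \<subseteq> {..<N} \<and>
        locc_reach N {s. \<exists>c. cmod c = 1 \<and> s = (\<lambda>x. c * embed N n f \<phi> x)} \<psi>)"

text \<open>States of the form Bell(\<alpha>,\<beta>) tensor (arbitrary state of the other qubits).\<close>
definition bell_target :: "nat \<Rightarrow> nat \<Rightarrow> nat \<Rightarrow> qstate set" where
  "bell_target N \<alpha> \<beta> = {s. is_state N s \<and>
      (\<forall>x. s x = (if x \<alpha> = x \<beta> then s (x(\<alpha> := False, \<beta> := False)) else 0))}"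

definition E_Bell :: "nat \<Rightarrow> qstate \<Rightarrow> nat \<Rightarrow> nat \<Rightarrow> bool" where
  "E_Bell N \<psi> \<alpha> \<beta> \<longleftrightarrow> locc_reach N (bell_target N \<alpha> \<beta>) \<psi>"

definition N_LE :: "nat \<Rightarrow> qstate \<Rightarrow> enat" where
  "N_LE N \<psi> = Sup {enat (card A) | A. A \<subseteq> {..<N} \<and>
      (\<forall>\<alpha>\<in>A. \<forall>\<beta>\<in>A. \<alpha> \<noteq> \<beta> \<longrightarrow> E_Bell N \<psi> \<alpha> \<beta>)}"

definition is_resource :: "(nat \<times> qstate) set \<Rightarrow> bool" where
  "is_resource \<Psi> \<longleftrightarrow> infinite \<Psi> \<and> (\<forall>(N, \<psi>)\<in>\<Psi>. is_state N \<psi>)"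

definition universal :: "(nat \<times> qstate) set \<Rightarrow> bool" where
  "universal \<Psi> \<longleftrightarrow> (\<forall>n \<phi>. is_state n \<phi> \<longrightarrow> (\<exists>(N, \<psi>)\<in>\<Psi>. locc_geq N \<psi> n \<phi>))"

definition N_LE_res :: "(nat \<times> qstate) set \<Rightarrow> enat" where
  "N_LE_res \<Psi> = (SUP p\<in>\<Psi>. N_LE (fst p) (snd p))"

end

theory Submission
  imports Defs
begin

(* Measuring a qubit of a GHZ state a|0...0> + b|1...1> in the X basis leaves a GHZ state on
   the remaining qubits, with b multiplied by the outcome sign +-1. Measuring out every qubit
   except alpha and beta and then correcting the relative phase locally at alpha therefore turns
   a GHZ state on any set containing alpha and beta into a Bell pair on them, deterministically.
   A universal resource must reach every m-qubit GHZ state, placed on some m qubits; composing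
   the two protocols makes each pair among these m qubits a Bell pair, so N_LE is at least m
   for every m. *)

definition ghz :: "nat \<Rightarrow> nat set \<Rightarrow> complex \<Rightarrow> complex \<Rightarrow> qstate" where
  "ghz N S a b = (\<lambda>x. if x \<in> basis N \<and> (\<forall>i. i \<notin> S \<longrightarrow> \<not> x i)
     then (if \<forall>i\<in>S. x i then b else if \<forall>i\<in>S. \<not> x i then a else 0) else 0)"

lemma locc_reach_trans:
  assumes "locc_reach N T \<psi>" and "\<And>s. s \<in> T \<Longrightarrow> locc_reach N T' s"
  shows "locc_reach N T' \<psi>"
  using assms(1)
proof induction
  case (finished \<psi>)
  then show ?case using assms(2) by blast
next
  case (local_step k Ms \<psi>)
  then show ?case by (intro locc_reach.local_step) auto
qed

lemma finite_basis: "finite (basis N)"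
proof -
  have "basis N \<subseteq> (\<lambda>A i. i \<in> A) ` Pow {..<N}"
  proof
    fix x assume x: "x \<in> basis N"
    have "x = (\<lambda>i. i \<in> {i. x i})" by auto
    moreover have "{i. x i} \<in> Pow {..<N}" using x by (auto simp: basis_def not_le[symmetric])
    ultimately show "x \<in> (\<lambda>A i. i \<in> A) ` Pow {..<N}" by blast
  qed
  then show ?thesis by (rule finite_subset) auto
qed

lemma basis_fun_upd_iff: "k < N \<Longrightarrow> x(k := v) \<in> basis N \<longleftrightarrow> x \<in> basis N"
  by (auto simp: basis_def)

lemma snorm_of_real_mult: "snorm N (\<lambda>x. complex_of_real r * \<psi> x) = \<bar>r\<bar> * snorm N \<psi>"
proof -
  have "(\<Sum>x\<in>basis N. (cmod (complex_of_real r * \<psi> x))\<^sup>2) = r\<^sup>2 * (\<Sum>x\<in>basis N. (cmod (\<psi> x))\<^sup>2)"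
    by (simp add: norm_mult power_mult_distrib sum_distrib_left)
  then show ?thesis by (simp add: snorm_def real_sqrt_mult)
qed

lemma snorm_ghz:
  assumes "S \<noteq> {}" "S \<subseteq> {..<N}"
  shows "snorm N (ghz N S a b) = sqrt ((cmod a)\<^sup>2 + (cmod b)\<^sup>2)"
proof -
  define zeros :: "nat \<Rightarrow> bool" where "zeros = (\<lambda>_. False)"
  define ones :: "nat \<Rightarrow> bool" where "ones = (\<lambda>i. i \<in> S)"
  have zeros_basis: "zeros \<in> basis N" by (simp add: zeros_def basis_def)
  have ones_basis: "ones \<in> basis N" using assms(2) by (auto simp: ones_def basis_def)
  have "zeros \<noteq> ones" using assms(1) by (auto simp: zeros_def ones_def fun_eq_iff)
  moreover have "ghz N S a b zeros = a" using zeros_basis assms(1) by (auto simp: ghz_def zeros_def)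
  moreover have "ghz N S a b ones = b" using ones_basis by (auto simp: ghz_def ones_def)
  moreover have "ghz N S a b x = 0" if "x \<in> basis N - {zeros, ones}" for x
    using that unfolding ghz_def zeros_def ones_def fun_eq_iff by auto
  then have "(\<Sum>x\<in>basis N. (cmod (ghz N S a b x))\<^sup>2) = (\<Sum>x\<in>{zeros, ones}. (cmod (ghz N S a b x))\<^sup>2)"
    by (intro sum.mono_neutral_right) (use finite_basis zeros_basis ones_basis in auto)
  ultimately show ?thesis by (simp add: snorm_def)
qed

lemma snorm_ghz_balanced:
  assumes "S \<noteq> {}" "S \<subseteq> {..<N}" "cmod a = 1 / sqrt 2" "cmod b = 1 / sqrt 2"
  shows "snorm N (ghz N S a b) = 1"
  using assms by (simp add: snorm_ghz power_divide)

lemma is_state_ghz_balanced: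
  assumes "S \<noteq> {}" "S \<subseteq> {..<N}" "cmod a = 1 / sqrt 2" "cmod b = 1 / sqrt 2"
  shows "is_state N (ghz N S a b)"
  using snorm_ghz_balanced[OF assms] by (auto simp: is_state_def ghz_def)

(* Outcome s = +-1 of an X-basis measurement, after which the qubit is reset to |0>. *)
definition x_outcome :: "complex \<Rightarrow> bool \<Rightarrow> bool \<Rightarrow> complex" where
  "x_outcome s = (\<lambda>out inn. if out then 0 else (if inn then s else 1) / complex_of_real (sqrt 2))"

lemma kraus_complete_x_measurement: "kraus_complete [x_outcome 1, x_outcome (-1)]"
proof -
  have "complex_of_real (sqrt 2) * complex_of_real (sqrt 2) = 2"
    by (simp flip: of_real_mult)
  then show ?thesis
    unfolding kraus_complete_def x_outcome_def UNIV_bool by (auto simp: field_simps)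
qed

lemma apply_local_x_outcome_ghz:
  assumes "k \<notin> S" "S \<noteq> {}" "k < N"
  shows "apply_local k (x_outcome s) (ghz N (insert k S) a b)
           = (\<lambda>x. complex_of_real (1 / sqrt 2) * ghz N S a (s * b) x)"
proof
  fix x
  show "apply_local k (x_outcome s) (ghz N (insert k S) a b) x
          = complex_of_real (1 / sqrt 2) * ghz N S a (s * b) x"
  proof (cases "x k")
    case True
    then show ?thesis using assms by (auto simp: apply_local_def x_outcome_def ghz_def)
  next
    case False
    then have "x(k := False) = x" by (auto simp: fun_eq_iff)
    moreover have "ghz N (insert k S) a b x =
        (if x \<in> basis N \<and> (\<forall>i. i \<notin> S \<longrightarrow> \<not> x i) \<and> (\<forall>i\<in>S. \<not> x i) then a else 0)"
      using False assms(2) by (auto simp: ghz_def)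
    moreover have "ghz N (insert k S) a b (x(k := True)) =
        (if x \<in> basis N \<and> (\<forall>i. i \<notin> S \<longrightarrow> \<not> x i) \<and> (\<forall>i\<in>S. x i) then b else 0)"
      using False assms by (auto simp: ghz_def basis_fun_upd_iff)
    moreover have "ghz N S a (s * b) x =
        (if x \<in> basis N \<and> (\<forall>i. i \<notin> S \<longrightarrow> \<not> x i)
         then (if \<forall>i\<in>S. x i then s * b else if \<forall>i\<in>S. \<not> x i then a else 0) else 0)"
      by (simp add: ghz_def)
    moreover have "(\<forall>i\<in>S. x i) \<Longrightarrow> \<not> (\<forall>i\<in>S. \<not> x i)" using assms(2) by auto
    ultimately show ?thesis
      using False unfolding apply_local_def UNIV_bool
      by (auto simp: x_outcome_def divide_simps)
  qed
qed

lemma ghz_pair_in_bell_target: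
  assumes "\<alpha> \<noteq> \<beta>" "\<alpha> < N" "\<beta> < N" "cmod a = 1 / sqrt 2"
  shows "ghz N {\<alpha>, \<beta>} a a \<in> bell_target N \<alpha> \<beta>"
proof -
  have "is_state N (ghz N {\<alpha>, \<beta>} a a)"
    using assms by (intro is_state_ghz_balanced) auto
  moreover have "ghz N {\<alpha>, \<beta>} a a x =
      (if x \<alpha> = x \<beta> then ghz N {\<alpha>, \<beta>} a a (x(\<alpha> := False, \<beta> := False)) else 0)" for x
  proof (cases "x \<alpha> = x \<beta>")
    case False
    then show ?thesis by (auto simp: ghz_def)
  next
    case True
    have "x(\<alpha> := False, \<beta> := False) \<in> basis N \<longleftrightarrow> x \<in> basis N"
      using assms by (simp add: basis_fun_upd_iff)
    then show ?thesis using True assms(1) by (cases "x \<alpha>") (auto simp: ghz_def)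
  qed
  ultimately show ?thesis by (simp add: bell_target_def)
qed

(* The local unitary diag(1, a/b) at alpha equalizes the two amplitudes. *)
lemma locc_reach_bell_from_ghz_pair:
  assumes "\<alpha> \<noteq> \<beta>" "\<alpha> < N" "\<beta> < N" "cmod a = 1 / sqrt 2" "cmod b = 1 / sqrt 2"
  shows "locc_reach N (bell_target N \<alpha> \<beta>) (ghz N {\<alpha>, \<beta>} a b)"
proof -
  define U :: "bool \<Rightarrow> bool \<Rightarrow> complex" where
    "U = (\<lambda>out inn. if out = inn then (if inn then a / b else 1) else 0)"
  have "b \<noteq> 0" using assms(5) by auto
  have "cmod (a / b) = 1" using assms(4,5) by (simp add: norm_divide)
  then have "cnj (a / b) * (a / b) = 1"
    by (metis complex_norm_square mult.commute of_real_1 power_one complex_mult_cnj)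
  then have unitary: "kraus_complete [U]"
    unfolding kraus_complete_def U_def UNIV_bool by auto
  have corrected: "apply_local \<alpha> U (ghz N {\<alpha>, \<beta>} a b) = ghz N {\<alpha>, \<beta>} a a"
  proof
    fix x :: "nat \<Rightarrow> bool"
    have "x(\<alpha> := x \<alpha>) = x" by simp
    moreover have "x(\<alpha> := v) \<in> basis N \<longleftrightarrow> x \<in> basis N" for v
      using assms(2) by (rule basis_fun_upd_iff)
    ultimately show "apply_local \<alpha> U (ghz N {\<alpha>, \<beta>} a b) x = ghz N {\<alpha>, \<beta>} a a x"
      unfolding apply_local_def UNIV_bool U_def using \<open>b \<noteq> 0\<close> assms(1)
      by (cases "x \<alpha>") (auto simp: ghz_def)
  qed
  have "snorm N (ghz N {\<alpha>, \<beta>} a a) = 1"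
    using assms by (intro snorm_ghz_balanced) auto
  moreover have "locc_reach N (bell_target N \<alpha> \<beta>) (ghz N {\<alpha>, \<beta>} a a)"
    using ghz_pair_in_bell_target[OF assms(1-4)] by (rule locc_reach.finished)
  ultimately show ?thesis
    by (intro locc_reach.local_step[OF assms(2) unitary]) (simp add: corrected)
qed

lemma locc_reach_bell_from_ghz:
  assumes "finite R" "\<alpha> \<notin> R" "\<beta> \<notin> R" "\<alpha> \<noteq> \<beta>" "\<alpha> < N" "\<beta> < N" "R \<subseteq> {..<N}"
    and "cmod a = 1 / sqrt 2" "cmod b = 1 / sqrt 2"
  shows "locc_reach N (bell_target N \<alpha> \<beta>) (ghz N (insert \<alpha> (insert \<beta> R)) a b)"
  using assms
proof (induction R arbitrary: b rule: finite_induct)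
  case empty
  then show ?case using locc_reach_bell_from_ghz_pair by simp
next
  case (insert k R)
  let ?S = "insert \<alpha> (insert \<beta> R)"
  have "k \<notin> ?S" "k < N" "?S \<subseteq> {..<N}" using insert by auto
  have "insert \<alpha> (insert \<beta> (insert k R)) = insert k ?S" by auto
  moreover have "locc_reach N (bell_target N \<alpha> \<beta>) (ghz N (insert k ?S) a b)"
  proof (rule locc_reach.local_step[OF \<open>k < N\<close> kraus_complete_x_measurement], intro ballI impI)
    fix M assume "M \<in> set [x_outcome 1, x_outcome (-1)]"
    then obtain s :: complex where M: "M = x_outcome s" and "cmod s = 1" by auto
    then have sb: "cmod (s * b) = 1 / sqrt 2" using insert.prems by (simp add: norm_mult)
    have post: "apply_local k M (ghz N (insert k ?S) a b)
                  = (\<lambda>x. complex_of_real (1 / sqrt 2) * ghz N ?S a (s * b) x)"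
      unfolding M using \<open>k \<notin> ?S\<close> \<open>k < N\<close> by (intro apply_local_x_outcome_ghz) auto
    have "snorm N (ghz N ?S a (s * b)) = 1"
      using \<open>?S \<subseteq> {..<N}\<close> sb insert.prems by (intro snorm_ghz_balanced) auto
    then have "snorm N (apply_local k M (ghz N (insert k ?S) a b)) = 1 / sqrt 2"
      unfolding post snorm_of_real_mult by simp
    moreover have "locc_reach N (bell_target N \<alpha> \<beta>) (ghz N ?S a (s * b))"
      using insert sb by auto
    ultimately show "locc_reach N (bell_target N \<alpha> \<beta>)
        (\<lambda>x. apply_local k M (ghz N (insert k ?S) a b) x /
           complex_of_real (snorm N (apply_local k M (ghz N (insert k ?S) a b))))"
      by (simp add: post)
  qed
  ultimately show ?case by simp
qed

lemma E_Bell_ghz: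
  assumes "finite S" "S \<subseteq> {..<N}" "\<alpha> \<in> S" "\<beta> \<in> S" "\<alpha> \<noteq> \<beta>"
    and "cmod a = 1 / sqrt 2" "cmod b = 1 / sqrt 2"
  shows "E_Bell N (ghz N S a b) \<alpha> \<beta>"
proof -
  have "S = insert \<alpha> (insert \<beta> (S - {\<alpha>, \<beta>}))" using assms by auto
  moreover have "locc_reach N (bell_target N \<alpha> \<beta>) (ghz N (insert \<alpha> (insert \<beta> (S - {\<alpha>, \<beta>}))) a b)"
    using assms by (intro locc_reach_bell_from_ghz) auto
  ultimately show ?thesis unfolding E_Bell_def by simp
qed

lemma embed_ghz:
  assumes "f ` {..<m} \<subseteq> {..<N}"
  shows "embed N m f (ghz m {..<m} a b) = ghz N (f ` {..<m}) a b"
proof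
  fix x :: "nat \<Rightarrow> bool"
  let ?y = "\<lambda>j. j < m \<and> x (f j)"
  have "?y \<in> basis m" by (simp add: basis_def)
  moreover have "(x \<in> basis N \<and> (\<forall>i<N. i \<notin> f ` {..<m} \<longrightarrow> \<not> x i)) \<longleftrightarrow>
                 (x \<in> basis N \<and> (\<forall>i. i \<notin> f ` {..<m} \<longrightarrow> \<not> x i))"
    by (auto simp: basis_def) (meson not_le)
  moreover have "(\<forall>i\<in>{..<m}. ?y i) \<longleftrightarrow> (\<forall>i\<in>f ` {..<m}. x i)" by auto
  moreover have "(\<forall>i\<in>{..<m}. \<not> ?y i) \<longleftrightarrow> (\<forall>i\<in>f ` {..<m}. \<not> x i)" by auto
  ultimately show "embed N m f (ghz m {..<m} a b) x = ghz N (f ` {..<m}) a b x"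
    unfolding embed_def ghz_def by auto
qed

lemma locc_geq_ghz_imp_N_LE_ge:
  assumes "locc_geq N \<psi> m (ghz m {..<m} a a)" "cmod a = 1 / sqrt 2"
  shows "enat m \<le> N_LE N \<psi>"
proof -
  obtain f where "inj_on f {..<m}" and f_range: "f ` {..<m} \<subseteq> {..<N}" and
    reach: "locc_reach N {s. \<exists>c. cmod c = 1 \<and> s = (\<lambda>x. c * embed N m f (ghz m {..<m} a a) x)} \<psi>"
    using assms(1) unfolding locc_geq_def by blast
  define A where "A = f ` {..<m}"
  have "card A = m" unfolding A_def using \<open>inj_on f {..<m}\<close> by (simp add: card_image)
  have "A \<subseteq> {..<N}" "finite A" using f_range by (simp_all add: A_def)
  have "E_Bell N \<psi> \<alpha> \<beta>" if "\<alpha> \<in> A" "\<beta> \<in> A" "\<alpha> \<noteq> \<beta>" for \<alpha> \<beta>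
    unfolding E_Bell_def
  proof (rule locc_reach_trans[OF reach])
    fix s assume "s \<in> {s. \<exists>c. cmod c = 1 \<and> s = (\<lambda>x. c * embed N m f (ghz m {..<m} a a) x)}"
    then obtain c where "cmod c = 1" and s: "s = (\<lambda>x. c * embed N m f (ghz m {..<m} a a) x)"
      by blast
    have "s = ghz N A (c * a) (c * a)"
      unfolding s embed_ghz[OF f_range] A_def by (auto simp: ghz_def fun_eq_iff)
    moreover have "E_Bell N (ghz N A (c * a) (c * a)) \<alpha> \<beta>"
      using \<open>finite A\<close> \<open>A \<subseteq> {..<N}\<close> that \<open>cmod c = 1\<close> assms(2)
      by (intro E_Bell_ghz) (simp_all add: norm_mult)
    ultimately show "locc_reach N (bell_target N \<alpha> \<beta>) s" by (simp add: E_Bell_def)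
  qed
  then show ?thesis
    unfolding N_LE_def using \<open>card A = m\<close> \<open>A \<subseteq> {..<N}\<close> by (intro Sup_upper) blast
qed

lemma universal_imp_N_LE_res_ge:
  assumes "universal \<Psi>" "0 < m"
  shows "enat m \<le> N_LE_res \<Psi>"
proof -
  define a :: complex where "a = complex_of_real (1 / sqrt 2)"
  have a: "cmod a = 1 / sqrt 2" unfolding a_def norm_of_real by simp
  have "is_state m (ghz m {..<m} a a)"
    using assms(2) a by (intro is_state_ghz_balanced) (auto simp: lessThan_empty_iff)
  then obtain N \<psi> where "(N, \<psi>) \<in> \<Psi>" and "locc_geq N \<psi> m (ghz m {..<m} a a)"
    using assms(1) unfolding universal_def by blast
  then have "enat m \<le> N_LE N \<psi>" using a by (intro locc_geq_ghz_imp_N_LE_ge)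
  also have "\<dots> \<le> N_LE_res \<Psi>"
    unfolding N_LE_res_def using \<open>(N, \<psi>) \<in> \<Psi>\<close> by (intro SUP_upper2[of "(N, \<psi>)"]) auto
  finally show ?thesis .
qed

theorem theorem6:
  assumes "is_resource \<Psi>" and "universal \<Psi>"
  shows "N_LE_res \<Psi> = \<infinity>"
proof (cases "N_LE_res \<Psi>")
  case (enat k)
  moreover have "enat (Suc k) \<le> N_LE_res \<Psi>"
    using assms(2) by (rule universal_imp_N_LE_res_ge) simp
  ultimately show ?thesis by simp
qed

end
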